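(* Let $n\geq 3$ be odd. (i) $\mu^-(G)\leq\mu^-(A_n)$ for all threshold graphs $G$ on $n$ vertices. (ii) $\mu^+(A_n)\leq\mu^+(G)$ for all threshold graphs $G$ on $n$ vertices with binary string $b=0^{s_1}1^{t_1}\cdots0^{s_k}1^{t_k}$ with $s_1\geq 2$. (iii) $\mu^+(A_n)\leq\mu^+(G)$ for all threshold graphs $G$ on $n$ vertices with binary string $b=0^{s_1}1^{t_1}\cdots0^{s_k}1^{t_k}$ with $s_1=1$ and $2k+1<n$.
   Context: Eigenvalues of a graph are those of its $(0,1)$-adjacency matrix. For a graph $H$, $\mu^-(H)$ is the largest eigenvalue of $H$ less than $-1$ and $\mu^+(H)$ is the smallest positive eigenvalue of $H$. Threshold graphs from binary strings: given $b=b_1\cdots b_n\in\{0,1\}^n$ with $b_1=0$, start with a single vertex and for $j=2,\ldots,n$ add a new vertex adjacent to all previous vertices if $b_j=1$ and isolated if $b_j=0$; the result is $G(b)$, and $b$ is its binary string. $0^s$ (resp. $1^t$) denotes $s\geq1$ consecutive zeros (resp. $t\geq1$ ones). The anti-regular graph $A_m$ is $G(b)$ with $b=0101\cdots01$ (length $m$) for $m$ even and $b=00101\cdots01$ (length $m$) for $m$ odd. *)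

theory Defs
  imports "Jordan_Normal_Form.Char_Poly"
begin

text \<open>Threshold graph G(b) from a binary string b (a bool list, True = 1, False = 0),
  vertices 0..length b - 1; vertex j (j>0) is adjacent to all earlier vertices iff b!j.\<close>

definition threshold_adj :: "bool list \<Rightarrow> nat \<Rightarrow> nat \<Rightarrow> bool" where
  "threshold_adj b i j \<longleftrightarrow> i \<noteq> j \<and> b ! (max i j)"

definition adj_matrix :: "bool list \<Rightarrow> real mat" where
  "adj_matrix b = mat (length b) (length b) (\<lambda>(i, j). if threshold_adj b i j then 1 else 0)"

definition threshold_string :: "nat \<Rightarrow> bool list \<Rightarrow> bool" where
  "threshold_string n b \<longleftrightarrow> length b = n \<and> n \<ge> 1 \<and> b ! 0 = False"

definition block_form :: "bool list \<Rightarrow> nat list \<Rightarrow> nat list \<Rightarrow> bool" where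
  "block_form b s t \<longleftrightarrow> length s = length t \<and> length s \<ge> 1 \<and>
     (\<forall>i < length s. s ! i \<ge> 1 \<and> t ! i \<ge> 1) \<and>
     b = concat (map (\<lambda>i. replicate (s ! i) False @ replicate (t ! i) True) [0..<length s])"

definition anti_regular_string :: "nat \<Rightarrow> bool list" where
  "anti_regular_string m =
     (if even m then concat (replicate (m div 2) [False, True])
      else False # concat (replicate (m div 2) [False, True]))"

definition mu_minus :: "real mat \<Rightarrow> real" where
  "mu_minus A = Max {x. eigenvalue A x \<and> x < -1}"

definition mu_plus :: "real mat \<Rightarrow> real" where
  "mu_plus A = Min {x. eigenvalue A x \<and> x > 0}"

end

theory Submission
  imports Defs
begin

text \<open>For \<open>l \<notin> {0, -1}\<close> the eigen-equation of \<open>G(b)\<close> can be solved vertex by vertex: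
  \<open>l\<close> is an eigenvalue iff a two-term linear recurrence along \<open>b\<close>, started at \<open>(1, 1)\<close>,
  ends with first coordinate \<open>0\<close>. Grouping the vertices into runs \<open>0\<^sup>s 1\<^sup>t \<dots>\<close>, the ratio of the
  two coordinates alternates in sign from run to run when \<open>l\<close> is close to \<open>0\<close> (from above) or
  to \<open>-1\<close> (from below), and by continuity this sign pattern can only break down, as \<open>l\<close> moves
  away, at an eigenvalue. As long as the pattern of the anti-regular graph \<open>A\<^sub>n\<close> holds at \<open>l\<close>,
  the ratios of every other admissible string are bounded by those of \<open>A\<^sub>n\<close> and stay away from the
  poles of the recurrence, so \<open>l\<close> is not an eigenvalue of that graph either. Hence \<open>A\<^sub>n\<close> has an
  eigenvalue at least as close to \<open>-1\<close> (resp. \<open>0\<close>) as \<open>\<mu>\<^sup>-(G)\<close> (resp. \<open>\<mu>\<^sup>+(G)\<close>).\<close>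

section \<open>Eigenvalues as roots of a recurrence\<close>

definition isolated_coeff :: "real \<Rightarrow> real" where
  "isolated_coeff l = 1 / l"

definition dominating_coeff :: "real \<Rightarrow> real" where
  "dominating_coeff l = - 1 / (l + 1)"

text \<open>If \<open>A v = l v\<close> and \<open>l * v $ 0 = 1\<close>, the state after the first \<open>m\<close> vertices is
  \<open>(T, S)\<close> with \<open>T\<close> the sum of \<open>v\<close> over the later dominating vertices and \<open>S - T\<close> the sum over
  the earlier vertices; the eigen-equation at vertex \<open>m\<close> gives \<open>v $ m\<close>, hence the next
  state (see \<open>eigenvector_string_state\<close>).\<close>
fun run_step :: "real \<Rightarrow> bool \<Rightarrow> nat \<Rightarrow> real \<times> real \<Rightarrow> real \<times> real" where
  "run_step l True m (T, S) = (T + real m * dominating_coeff l * S, S)"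
| "run_step l False m (T, S) = (T, S + real m * isolated_coeff l * T)"

lemma fst_run_step:
    "fst (run_step l c m v) = (if c then fst v + real m * dominating_coeff l * snd v else fst v)"
  and snd_run_step:
    "snd (run_step l c m v) = (if c then snd v else snd v + real m * isolated_coeff l * fst v)"
  by (cases c; cases v; simp)+

definition string_state :: "real \<Rightarrow> bool list \<Rightarrow> real \<times> real" where
  "string_state l b = foldl (\<lambda>v c. run_step l c 1 v) (1, 1) b"

lemma string_state_take_Suc:
  "m < length b \<Longrightarrow> string_state l (take (Suc m) b) = run_step l (b ! m) 1 (string_state l (take m b))"
  by (simp add: string_state_def take_Suc_conv_app_nth)

definition prefix_sum :: "real vec \<Rightarrow> nat \<Rightarrow> real" where
  "prefix_sum v m = (\<Sum>i<m. v $ i)"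

definition dominating_sum :: "bool list \<Rightarrow> real vec \<Rightarrow> nat \<Rightarrow> real" where
  "dominating_sum b v m = (\<Sum>i\<in>{m..<length b}. if b ! i then v $ i else 0)"

lemma prefix_sum_Suc: "prefix_sum v (Suc m) = prefix_sum v m + v $ m"
  by (simp add: prefix_sum_def)

lemma dominating_sum_Suc:
  "m < length b \<Longrightarrow> dominating_sum b v m = (if b ! m then v $ m else 0) + dominating_sum b v (Suc m)"
  unfolding dominating_sum_def by (subst sum.atLeast_Suc_lessThan) auto

lemma adj_matrix_mult_vec_nth:
  assumes "v \<in> carrier_vec (length b)" and "j < length b"
  shows "(adj_matrix b *\<^sub>v v) $ j = (if b ! j then prefix_sum v j else 0) + dominating_sum b v (Suc j)"
proof -
  let ?f = "\<lambda>i. (if threshold_adj b j i then 1 else 0) * v $ i"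
  have split: "{..<length b} = {..<j} \<union> {j} \<union> {Suc j..<length b}"
    using assms(2) by auto
  have "(adj_matrix b *\<^sub>v v) $ j = (\<Sum>i<length b. ?f i)"
    using assms by (simp add: adj_matrix_def mult_mat_vec_def scalar_prod_def lessThan_atLeast0)
  also have "\<dots> = (\<Sum>i<j. ?f i) + ?f j + (\<Sum>i\<in>{Suc j..<length b}. ?f i)"
    unfolding split by (subst sum.union_disjoint, auto)+
  also have "\<dots> = (if b ! j then prefix_sum v j else 0) + dominating_sum b v (Suc j)"
    by (auto simp: threshold_adj_def max_def prefix_sum_def dominating_sum_def intro!: sum.cong)
  finally show ?thesis .
qed

lemma adj_matrix_eigen_equation:
  assumes "v \<in> carrier_vec (length b)"
  shows "adj_matrix b *\<^sub>v v = l \<cdot>\<^sub>v v \<longleftrightarrow>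
    (\<forall>j<length b. l * v $ j = (if b ! j then prefix_sum v j else 0) + dominating_sum b v (Suc j))"
proof -
  have "dim_vec (adj_matrix b *\<^sub>v v) = length b" "dim_vec (l \<cdot>\<^sub>v v) = length b"
    using assms by (simp_all add: adj_matrix_def)
  then show ?thesis
    using assms
    by (simp only: vec_eq_iff) (auto simp: adj_matrix_mult_vec_nth simp del: index_mult_mat_vec)
qed

lemma eigenvector_string_state:
  assumes "l \<noteq> 0" "l \<noteq> -1" "b ! 0 = False" "b \<noteq> []"
    and v: "v \<in> carrier_vec (length b)" and eigen: "adj_matrix b *\<^sub>v v = l \<cdot>\<^sub>v v"
    and "m \<le> length b"
  shows "dominating_sum b v m = l * v $ 0 * fst (string_state l (take m b)) \<and>
    prefix_sum v m + dominating_sum b v m = l * v $ 0 * snd (string_state l (take m b))"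
  using \<open>m \<le> length b\<close>
proof (induction m)
  case 0
  have "dominating_sum b v 0 = l * v $ 0"
    using eigen assms(3,4) dominating_sum_Suc[of 0 b v] by (simp add: adj_matrix_eigen_equation[OF v])
  then show ?case by (simp add: string_state_def prefix_sum_def)
next
  case (Suc m)
  then have m: "m < length b" by simp
  obtain T S where TS: "string_state l (take m b) = (T, S)" by force
  have eq: "l * v $ m = (if b ! m then prefix_sum v m else 0) + dominating_sum b v (Suc m)"
    using eigen m by (simp add: adj_matrix_eigen_equation[OF v])
  from Suc.IH m TS have IH: "dominating_sum b v m = l * v $ 0 * T"
    "prefix_sum v m + dominating_sum b v m = l * v $ 0 * S" by auto
  show ?case
  proof (cases "b ! m")
    case True
    then have "(l + 1) * v $ m = l * v $ 0 * S"
      using eq IH dominating_sum_Suc[OF m, of v] by (simp add: algebra_simps)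
    then have "v $ m = l * v $ 0 * S * dominating_coeff l * -1"
      using assms(2) by (simp add: dominating_coeff_def field_simps)
    then show ?thesis
      using True IH TS dominating_sum_Suc[OF m, of v]
      by (simp add: string_state_take_Suc[OF m] prefix_sum_Suc algebra_simps)
  next
    case False
    then have "v $ m = l * v $ 0 * T * isolated_coeff l"
      using eq IH dominating_sum_Suc[OF m, of v] assms(1) by (simp add: isolated_coeff_def field_simps)
    then show ?thesis
      using False IH TS dominating_sum_Suc[OF m, of v]
      by (simp add: string_state_take_Suc[OF m] prefix_sum_Suc algebra_simps)
  qed
qed

lemma string_state_root_of_eigenvalue:
  assumes "l \<noteq> 0" "l \<noteq> -1" "b ! 0 = False" "b \<noteq> []"
    and "eigenvalue (adj_matrix b) l"
  shows "fst (string_state l b) = 0"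
proof -
  obtain v where v: "v \<in> carrier_vec (length b)" and "v \<noteq> 0\<^sub>v (length b)"
    and eigen: "adj_matrix b *\<^sub>v v = l \<cdot>\<^sub>v v"
    using assms(5) by (auto simp: eigenvalue_def eigenvector_def adj_matrix_def)
  define c where "c = l * v $ 0"
  note state = eigenvector_string_state[OF assms(1-4) v eigen, folded c_def]
  have "c \<noteq> 0"
  proof
    assume "c = 0"
    then have "prefix_sum v m = 0" if "m \<le> length b" for m
      using state[OF that] by simp
    then have "v $ m = 0" if "m < length b" for m
      using that prefix_sum_Suc[of v m] by simp
    then show False
      using v \<open>v \<noteq> 0\<^sub>v (length b)\<close> by (metis carrier_vecD eq_vecI index_zero_vec)
  qed
  moreover have "dominating_sum b v (length b) = 0"
    by (simp add: dominating_sum_def)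
  ultimately show ?thesis
    using state[of "length b"] by simp
qed

definition string_eigenvector :: "real \<Rightarrow> bool list \<Rightarrow> real vec" where
  "string_eigenvector l b = vec (length b) (\<lambda>m. if b ! m
     then snd (string_state l (take m b)) / (l + 1) else fst (string_state l (take m b)) / l)"

lemma string_eigenvector_sums:
  assumes "l \<noteq> 0" "l \<noteq> -1" "m \<le> length b"
  shows "fst (string_state l (take m b)) =
      1 - (\<Sum>i<m. if b ! i then string_eigenvector l b $ i else 0) \<and>
    snd (string_state l (take m b)) - fst (string_state l (take m b)) =
      prefix_sum (string_eigenvector l b) m"
  using assms(3)
proof (induction m)
  case 0
  then show ?case
    by (simp add: string_state_def prefix_sum_def)
next
  case (Suc m)
  then have m: "m < length b"
    by simp
  obtain T S where TS: "string_state l (take m b) = (T, S)"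
    by force
  have "l + 1 \<noteq> 0"
    using assms(2) by linarith
  then show ?case
    using Suc.IH m TS assms(1) string_state_take_Suc[OF m, of l]
    by (cases "b ! m")
      (auto simp: string_eigenvector_def prefix_sum_Suc isolated_coeff_def dominating_coeff_def)
qed

lemma eigenvalue_of_string_state_root:
  assumes "l \<noteq> 0" "l \<noteq> -1" "b ! 0 = False" "b \<noteq> []"
    and root: "fst (string_state l b) = 0"
  shows "eigenvalue (adj_matrix b) l"
proof -
  define v where "v = string_eigenvector l b"
  let ?X = "\<lambda>m. string_state l (take m b)" and ?Q = "\<lambda>m. \<Sum>i<m. if b ! i then v $ i else 0"
  note sums = string_eigenvector_sums[OF assms(1,2), of _ b, folded v_def]
  have v: "v \<in> carrier_vec (length b)"
    by (simp add: v_def string_eigenvector_def)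
  have tail: "dominating_sum b v m = fst (?X m)" if "m \<le> length b" for m
  proof -
    have "?Q (length b) = ?Q m + dominating_sum b v m"
      using that by (simp add: dominating_sum_def lessThan_atLeast0 sum.atLeastLessThan_concat)
    moreover have "?Q (length b) = 1"
      using sums[of "length b"] root by simp
    ultimately show ?thesis
      using sums[OF that] by simp
  qed
  have "adj_matrix b *\<^sub>v v = l \<cdot>\<^sub>v v"
    unfolding adj_matrix_eigen_equation[OF v]
  proof (intro allI impI)
    fix j assume j: "j < length b"
    have vj: "v $ j = (if b ! j then snd (?X j) / (l + 1) else fst (?X j) / l)"
      using j by (simp add: v_def string_eigenvector_def)
    show "l * v $ j = (if b ! j then prefix_sum v j else 0) + dominating_sum b v (Suc j)"
    proof (cases "b ! j")
      case True
      then have "(l + 1) * v $ j = snd (?X j)"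
        using vj assms(2) by (simp add: add_eq_0_iff)
      then show ?thesis
        using True sums[of j] tail[of j] dominating_sum_Suc[OF j, of v] j by (simp add: algebra_simps)
    next
      case False
      then show ?thesis
        using vj assms(1) tail[of j] dominating_sum_Suc[OF j, of v] j by simp
    qed
  qed
  moreover have "v $ 0 \<noteq> 0"
    using assms(1,3,4) by (simp add: v_def string_eigenvector_def string_state_def)
  then have "v \<noteq> 0\<^sub>v (length b)"
    using assms(4) by auto
  ultimately show ?thesis
    using v by (auto simp: eigenvalue_def eigenvector_def adj_matrix_def)
qed

lemma eigenvalue_adj_matrix_iff:
  assumes "l \<noteq> 0" "l \<noteq> -1" "b ! 0 = False" "b \<noteq> []"
  shows "eigenvalue (adj_matrix b) l \<longleftrightarrow> fst (string_state l b) = 0"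
  using string_state_root_of_eigenvalue[OF assms] eigenvalue_of_string_state_root[OF assms] by blast

lemma finite_eigenvalues:
  assumes "(A :: 'a :: field mat) \<in> carrier_mat n n"
  shows "finite {x. eigenvalue A x}"
proof -
  have "char_poly A \<noteq> 0"
    using degree_monic_char_poly[OF assms] by auto
  then show ?thesis
    using poly_roots_finite eigenvalue_root_char_poly[OF assms] by simp
qed

lemma finite_eigenvalues_adj_matrix: "finite {x. eigenvalue (adj_matrix b) x \<and> P x}"
  using finite_eigenvalues[of "adj_matrix b" "length b"] by (auto simp: adj_matrix_def)

section \<open>Runs and sign alternation\<close>

text \<open>A list \<open>ms\<close> of run lengths encodes the string with \<open>ms ! 0\<close> zeros, then \<open>ms ! 1\<close>
  ones, then \<open>ms ! 2\<close> zeros, and so on: run \<open>i\<close> consists of dominating vertices iff \<open>i\<close> is odd.\<close>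
primrec run_state :: "real \<Rightarrow> nat list \<Rightarrow> nat \<Rightarrow> real \<times> real" where
  "run_state l ms 0 = (1, 1)"
| "run_state l ms (Suc i) = run_step l (odd i) (ms ! i) (run_state l ms i)"

declare run_state.simps(2) [simp del]

definition ratio :: "real \<times> real \<Rightarrow> real" where
  "ratio v = snd v / fst v"

definition run_product :: "real \<Rightarrow> nat list \<Rightarrow> nat \<Rightarrow> real" where
  "run_product l ms i = fst (run_state l ms i) * snd (run_state l ms i)"

definition alternating :: "real \<Rightarrow> real \<Rightarrow> nat list \<Rightarrow> bool" where
  "alternating e l ms \<longleftrightarrow> (\<forall>i<length ms. 0 < (if even i then e else - e) * run_product l ms (Suc i))"

lemma ratio_run_step_isolated:
  assumes "fst v \<noteq> 0"
  shows "ratio (run_step l False m v) = ratio v + real m * isolated_coeff l"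
  using assms by (simp add: ratio_def fst_run_step snd_run_step field_simps)

lemma fst_run_step_dominating:
  assumes "fst v \<noteq> 0"
  shows "fst (run_step l True m v) = fst v * (1 + real m * dominating_coeff l * ratio v)"
  using assms by (simp add: ratio_def fst_run_step field_simps)

text \<open>No hypothesis on the denominator is needed: if it vanishes, both sides are \<open>0\<close>.\<close>
lemma ratio_run_step_dominating:
  assumes "fst v \<noteq> 0"
  shows "ratio (run_step l True m v) = ratio v / (1 + real m * dominating_coeff l * ratio v)"
  using fst_run_step_dominating[OF assms] by (simp add: ratio_def snd_run_step)

lemma alternating_iff_ratio:
  "alternating e l ms \<longleftrightarrow> (\<forall>i<length ms. fst (run_state l ms (Suc i)) \<noteq> 0 \<and>
     0 < (if even i then e else - e) * ratio (run_state l ms (Suc i)))"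
proof -
  have sign: "0 < c * (T * S) \<longleftrightarrow> T \<noteq> 0 \<and> 0 < c * (S / T)" for c T S :: real
  proof (cases "T = 0")
    case False
    then have "c * (T * S) = c * (S / T) * T\<^sup>2" and "0 < T\<^sup>2"
      by (simp add: power2_eq_square, simp)
    then show ?thesis
      using False by (metis mult_pos_pos zero_less_mult_pos2)
  qed simp
  show ?thesis
    unfolding alternating_def run_product_def ratio_def sign ..
qed

lemma alternatingD:
  assumes "alternating e l ms" "0 < i" "i \<le> length ms"
  shows "fst (run_state l ms i) \<noteq> 0" "0 < (if odd i then e else - e) * ratio (run_state l ms i)"
proof -
  obtain r where "i = Suc r" "r < length ms"
    using assms(2,3) gr0_implies_Suc by force
  then show "fst (run_state l ms i) \<noteq> 0" "0 < (if odd i then e else - e) * ratio (run_state l ms i)"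
    using assms(1) unfolding alternating_iff_ratio by auto
qed

section \<open>The sign pattern breaks down only at roots\<close>

lemma isCont_run_state:
  assumes "l0 \<noteq> 0" "l0 \<noteq> -1"
  shows "isCont (\<lambda>l. run_state l ms i) l0"
proof (induction i)
  case (Suc i)
  have coeffs: "isCont isolated_coeff l0" "isCont dominating_coeff l0"
    using assms unfolding isolated_coeff_def[abs_def] dominating_coeff_def[abs_def]
    by (intro continuous_intros; simp add: add_eq_0_iff)+
  have "isCont (\<lambda>l. (fst (run_step l (odd i) (ms ! i) (run_state l ms i)),
      snd (run_step l (odd i) (ms ! i) (run_state l ms i)))) l0"
    using Suc.IH coeffs
    by (cases "odd i") (simp_all add: fst_run_step snd_run_step)
  then show ?case
    by (simp add: run_state.simps(2))
qed simp

lemma tendsto_run_state: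
  assumes "l0 \<noteq> 0" "l0 \<noteq> -1"
  shows "((\<lambda>l. run_state l ms i) \<longlongrightarrow> run_state l0 ms i) (at l0 within S)"
  using isCont_run_state[OF assms] continuous_at_imp_continuous_at_within continuous_within by blast

lemma eventually_alternating:
  assumes "l0 \<noteq> 0" "l0 \<noteq> -1" and "alternating e l0 ms"
  shows "\<forall>\<^sub>F l in at l0. alternating e l ms"
proof -
  let ?q = "\<lambda>l i. (if even i then e else - e) * run_product l ms (Suc i)"
  have "\<forall>i\<in>{..<length ms}. \<forall>\<^sub>F l in at l0. 0 < ?q l i"
  proof
    fix i assume "i \<in> {..<length ms}"
    then have "0 < ?q l0 i"
      using assms(3) by (simp add: alternating_def)
    moreover have "((\<lambda>l. ?q l i) \<longlongrightarrow> ?q l0 i) (at l0)"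
      unfolding run_product_def by (intro tendsto_intros tendsto_run_state assms(1,2))
    ultimately show "\<forall>\<^sub>F l in at l0. 0 < ?q l i"
      by (simp add: order_tendstoD)
  qed
  then have "\<forall>\<^sub>F l in at l0. \<forall>i\<in>{..<length ms}. 0 < ?q l i"
    by (rule eventually_ball_finite[rotated]) simp
  then show ?thesis
    by (rule eventually_mono) (simp add: alternating_def)
qed

lemma eventually_pos_mult_same_limit:
  fixes f g :: "'a \<Rightarrow> real"
  assumes "(f \<longlongrightarrow> c) F" "(g \<longlongrightarrow> c) F" "c \<noteq> 0"
  shows "\<forall>\<^sub>F x in F. 0 < f x * g x"
proof -
  have "((\<lambda>x. f x * g x) \<longlongrightarrow> c * c) F"
    using assms(1,2) by (rule tendsto_mult)
  moreover have "0 < c * c"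
    using assms(3) by (simp add: not_square_less_zero less_le)
  ultimately show ?thesis
    by (rule order_tendstoD(1))
qed

text \<open>Run \<open>r\<close> moves only one coordinate of the state. If the other one vanishes at \<open>l0\<close>,
  the moved coordinate before and after run \<open>r\<close> tends to the same nonzero value.\<close>
lemma eventually_run_products_same_sign:
  assumes "l0 \<noteq> 0" "l0 \<noteq> -1" and zero: "run_product l0 ms r = 0"
    and moved: "(if odd r then fst else snd) (run_state l0 ms r) \<noteq> 0"
  shows "\<forall>\<^sub>F l in at l0 within S. 0 \<le> run_product l ms r * run_product l ms (Suc r)"
proof (cases "odd r")
  case True
  let ?T = "\<lambda>l i. fst (run_state l ms i)"
  have "snd (run_state l0 ms r) = 0"
    using zero moved True by (simp add: run_product_def)
  then have "?T l0 (Suc r) = ?T l0 r"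
    using True by (simp add: run_state.simps(2) fst_run_step)
  then have "\<forall>\<^sub>F l in at l0 within S. 0 < ?T l r * ?T l (Suc r)"
    using moved True tendsto_fst[OF tendsto_run_state[OF assms(1,2), of ms r S]]
      tendsto_fst[OF tendsto_run_state[OF assms(1,2), of ms "Suc r" S]]
    by (intro eventually_pos_mult_same_limit[of _ "?T l0 r"]) auto
  then show ?thesis
  proof (rule eventually_mono)
    fix l assume "0 < ?T l r * ?T l (Suc r)"
    moreover have "run_product l ms r * run_product l ms (Suc r) =
        (snd (run_state l ms r))\<^sup>2 * (?T l r * ?T l (Suc r))"
      using True by (simp add: run_product_def run_state.simps(2) snd_run_step power2_eq_square)
    ultimately show "0 \<le> run_product l ms r * run_product l ms (Suc r)"
      by simp
  qed
next
  case False
  let ?S = "\<lambda>l i. snd (run_state l ms i)"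
  have "fst (run_state l0 ms r) = 0"
    using zero moved False by (simp add: run_product_def)
  then have "?S l0 (Suc r) = ?S l0 r"
    using False by (simp add: run_state.simps(2) snd_run_step)
  then have "\<forall>\<^sub>F l in at l0 within S. 0 < ?S l r * ?S l (Suc r)"
    using moved False tendsto_snd[OF tendsto_run_state[OF assms(1,2), of ms r S]]
      tendsto_snd[OF tendsto_run_state[OF assms(1,2), of ms "Suc r" S]]
    by (intro eventually_pos_mult_same_limit[of _ "?S l0 r"]) auto
  then show ?thesis
  proof (rule eventually_mono)
    fix l assume "0 < ?S l r * ?S l (Suc r)"
    moreover have "run_product l ms r * run_product l ms (Suc r) =
        (fst (run_state l ms r))\<^sup>2 * (?S l r * ?S l (Suc r))"
      using False by (simp add: run_product_def run_state.simps(2) fst_run_step power2_eq_square)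
    ultimately show "0 \<le> run_product l ms r * run_product l ms (Suc r)"
      by simp
  qed
qed

lemma first_vanishing_run_product:
  assumes "e \<noteq> 0" "\<not> alternating e l ms"
    and nonneg: "\<And>i. i < length ms \<Longrightarrow> 0 \<le> (if even i then e else - e) * run_product l ms (Suc i)"
  obtains j where "j < length ms" "run_product l ms (Suc j) = 0"
    "(if odd (Suc j) then fst else snd) (run_state l ms (Suc j)) \<noteq> 0"
proof -
  let ?q = "\<lambda>i. (if even i then e else - e) * run_product l ms (Suc i)"
  have "\<exists>i. i < length ms \<and> ?q i \<le> 0"
    using assms(2) by (auto simp: alternating_def not_less)
  then obtain j where j: "j < length ms" "?q j \<le> 0" and before: "\<forall>i<j. \<not> (i < length ms \<and> ?q i \<le> 0)"
    unfolding exists_least_iff[of "\<lambda>i. i < length ms \<and> ?q i \<le> 0"] by blast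
  have zero: "run_product l ms (Suc j) = 0"
    using nonneg[OF j(1)] j(2) assms(1) by (simp split: if_splits)
  have "run_product l ms j \<noteq> 0"
  proof (cases j)
    case (Suc i)
    then show ?thesis
      using before j(1) by (auto simp: not_le split: if_splits)
  qed (simp add: run_product_def)
  then have "(if odd (Suc j) then fst else snd) (run_state l ms (Suc j)) \<noteq> 0"
    by (simp add: run_product_def run_state.simps(2) fst_run_step snd_run_step)
  with j(1) zero show ?thesis
    by (rule that)
qed

lemma alternating_boundary_root:
  assumes "even (length ms)" "e \<noteq> 0" "l0 \<noteq> 0" "l0 \<noteq> -1" "at l0 within S \<noteq> bot"
    and near: "\<forall>\<^sub>F l in at l0 within S. alternating e l ms" and "\<not> alternating e l0 ms"
  shows "fst (run_state l0 ms (length ms)) = 0"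
proof -
  let ?q = "\<lambda>l i. (if even i then e else - e) * run_product l ms (Suc i)"
  have "0 \<le> ?q l0 i" if "i < length ms" for i
  proof (rule tendsto_lowerbound[OF _ _ assms(5)])
    show "((\<lambda>l. ?q l i) \<longlongrightarrow> ?q l0 i) (at l0 within S)"
      unfolding run_product_def by (intro tendsto_intros tendsto_run_state assms(3,4))
    show "\<forall>\<^sub>F l in at l0 within S. 0 \<le> ?q l i"
      using near by (rule eventually_mono) (use that in \<open>simp add: alternating_def less_imp_le\<close>)
  qed
  then obtain j where j: "j < length ms" and zero: "run_product l0 ms (Suc j) = 0"
    and moved: "(if odd (Suc j) then fst else snd) (run_state l0 ms (Suc j)) \<noteq> 0"
    using first_vanishing_run_product[OF assms(2,7)] by blast
  show ?thesis
  proof (cases "Suc j = length ms")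
    case True
    then have "snd (run_state l0 ms (Suc j)) \<noteq> 0"
      using moved assms(1) by simp
    then show ?thesis
      using zero True by (simp add: run_product_def)
  next
    case False
    then have next_run: "Suc j < length ms"
      using j by simp
    have opposite: "x * y < 0" if "0 < c * x" "0 < - c * y" for c x y :: real
      using that by (auto simp: zero_less_mult_iff mult_less_0_iff)
    have "\<forall>\<^sub>F l in at l0 within S. 0 \<le> run_product l ms (Suc j) * run_product l ms (Suc (Suc j))"
      by (rule eventually_run_products_same_sign[OF assms(3,4) zero moved])
    moreover have
      "\<forall>\<^sub>F l in at l0 within S. run_product l ms (Suc j) * run_product l ms (Suc (Suc j)) < 0"
      using near
    proof (rule eventually_mono)
      fix l assume "alternating e l ms"
      then have "0 < ?q l j" "0 < ?q l (Suc j)"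
        using j next_run by (auto simp: alternating_def)
      then show "run_product l ms (Suc j) * run_product l ms (Suc (Suc j)) < 0"
        by (intro opposite[of "if even j then e else - e"]) auto
    qed
    ultimately have "\<forall>\<^sub>F l in at l0 within S. False"
      by eventually_elim simp
    then show ?thesis
      using assms(5) by simp
  qed
qed

lemma moebius_bounds_of_ge_4:
  fixes x k :: real
  assumes "4 \<le> x" "k \<le> -6/7"
  shows "1 + k * x < 0" "-2 \<le> x / (1 + k * x)" "x / (1 + k * x) < 0"
proof -
  have "k * x \<le> -6/7 * x"
    using assms by (intro mult_right_mono) auto
  then show neg: "1 + k * x < 0"
    using assms(1) by linarith
  show "x / (1 + k * x) < 0"
    using neg assms(1) by (simp add: divide_pos_neg)
  have "x * (1 + 2 * k) \<le> 4 * (1 + 2 * k)"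
    using assms by (intro mult_right_mono_neg) auto
  then have "x \<le> -2 * (1 + k * x)"
    using assms(2) by (simp add: algebra_simps)
  then show "-2 \<le> x / (1 + k * x)"
    using neg by (simp add: neg_le_divide_eq)
qed

lemma moebius_bounds_of_le_neg_quarter:
  fixes x k :: real
  assumes "x \<le> -1/4" "6 \<le> k"
  shows "1 + k * x < 0" "0 < x / (1 + k * x)" "x / (1 + k * x) \<le> 1/2"
proof -
  have "k * x \<le> 6 * x"
    using assms by (intro mult_right_mono_neg) auto
  then show neg: "1 + k * x < 0"
    using assms(1) by linarith
  show "0 < x / (1 + k * x)"
    using neg assms(1) by (simp add: divide_neg_neg)
  have "1 + k * x \<le> 2 * x"
    using \<open>k * x \<le> 6 * x\<close> assms(1) by linarith
  then show "x / (1 + k * x) \<le> 1/2"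
    using neg by (simp add: field_simps)
qed

lemma run_state_ratio_near_zero:
  assumes pos: "\<forall>i<length ms. 0 < ms ! i" and "0 < l" "l \<le> 1/6" "i \<le> length ms"
  shows "fst (run_state l ms i) \<noteq> 0 \<and> (if odd i then 4 \<le> ratio (run_state l ms i)
    else -2 \<le> ratio (run_state l ms i) \<and> (0 < i \<longrightarrow> ratio (run_state l ms i) < 0))"
proof -
  have iso: "6 \<le> isolated_coeff l" and dom: "dominating_coeff l \<le> -6/7"
    using assms(2,3) by (simp_all add: isolated_coeff_def dominating_coeff_def field_simps)
  show ?thesis
    using assms(4)
  proof (induction i)
    case (Suc i)
    let ?v = "run_state l ms i" and ?m = "real (ms ! i)"
    have m: "1 \<le> ?m" and T: "fst ?v \<noteq> 0"
      using pos Suc by (auto simp: Suc_le_eq)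
    show ?case
    proof (cases "odd i")
      case True
      have "?m * dominating_coeff l \<le> 1 * dominating_coeff l"
        using m dom by (intro mult_right_mono_neg) auto
      then have "?m * dominating_coeff l \<le> -6/7"
        using dom by linarith
      moreover have "4 \<le> ratio ?v"
        using Suc True by simp
      ultimately show ?thesis
        using moebius_bounds_of_ge_4[of "ratio ?v" "?m * dominating_coeff l"] True T
        by (simp add: run_state.simps(2) fst_run_step_dominating ratio_run_step_dominating mult.assoc)
    next
      case False
      have "1 * isolated_coeff l \<le> ?m * isolated_coeff l"
        using m iso by (intro mult_right_mono) auto
      then have "6 \<le> ?m * isolated_coeff l"
        using iso by linarith
      moreover have "-2 \<le> ratio ?v"
        using Suc False by simp
      ultimately show ?thesis
        using False T by (simp add: run_state.simps(2) fst_run_step ratio_run_step_isolated)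
    qed
  qed (simp add: ratio_def)
qed

lemma alternating_near_zero:
  assumes "\<forall>i<length ms. 0 < ms ! i" and "0 < l" "l \<le> 1/6"
  shows "alternating 1 l ms"
  unfolding alternating_iff_ratio
proof (intro allI impI)
  fix i assume "i < length ms"
  then show "fst (run_state l ms (Suc i)) \<noteq> 0 \<and>
      0 < (if even i then 1 else - 1) * ratio (run_state l ms (Suc i))"
    using run_state_ratio_near_zero[OF assms, of "Suc i"] by auto
qed

lemma run_state_ratio_near_minus_one:
  assumes pos: "\<forall>i<length ms. 0 < ms ! i" and first: "2 \<le> ms ! 0"
    and "-7/6 \<le> l" "l < -1" "i \<le> length ms"
  shows "fst (run_state l ms i) \<noteq> 0 \<and> (if odd i then ratio (run_state l ms i) \<le> -1/4
    else ratio (run_state l ms i) \<le> 1 \<and>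
      (0 < i \<longrightarrow> 0 < ratio (run_state l ms i) \<and> ratio (run_state l ms i) \<le> 1/2))"
proof -
  have iso: "isolated_coeff l \<le> -6/7" and dom: "6 \<le> dominating_coeff l"
    using assms(3,4) by (simp_all add: isolated_coeff_def dominating_coeff_def field_simps)
  show ?thesis
    using assms(5)
  proof (induction i)
    case (Suc i)
    let ?v = "run_state l ms i" and ?m = "real (ms ! i)"
    have m: "1 \<le> ?m" and T: "fst ?v \<noteq> 0"
      using pos Suc by (auto simp: Suc_le_eq)
    show ?case
    proof (cases "odd i")
      case True
      have "1 * dominating_coeff l \<le> ?m * dominating_coeff l"
        using m dom by (intro mult_right_mono) auto
      then have "6 \<le> ?m * dominating_coeff l"
        using dom by linarith
      moreover have "ratio ?v \<le> -1/4"
        using Suc True by simp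
      ultimately show ?thesis
        using moebius_bounds_of_le_neg_quarter[of "ratio ?v" "?m * dominating_coeff l"] True T
        by (simp add: run_state.simps(2) fst_run_step_dominating ratio_run_step_dominating mult.assoc)
    next
      case False
      have "ratio ?v + ?m * isolated_coeff l \<le> -1/4"
      proof (cases "i = 0")
        case True
        have "?m * isolated_coeff l \<le> 2 * isolated_coeff l"
          using first iso True by (intro mult_right_mono_neg) auto
        moreover have "ratio ?v = 1"
          using True by (simp add: ratio_def)
        ultimately show ?thesis
          using iso by linarith
      next
        case False
        have "?m * isolated_coeff l \<le> 1 * isolated_coeff l"
          using m iso by (intro mult_right_mono_neg) auto
        moreover have "ratio ?v \<le> 1/2"
          using Suc False \<open>\<not> odd i\<close> by simp
        ultimately show ?thesis
          using iso by linarith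
      qed
      then show ?thesis
        using False T by (simp add: run_state.simps(2) fst_run_step ratio_run_step_isolated)
    qed
  qed (simp add: ratio_def)
qed

lemma alternating_near_minus_one:
  assumes "\<forall>i<length ms. 0 < ms ! i" and "2 \<le> ms ! 0"
    and "-7/6 \<le> l" "l < -1"
  shows "alternating (-1) l ms"
  unfolding alternating_iff_ratio
proof (intro allI impI)
  fix i assume "i < length ms"
  then show "fst (run_state l ms (Suc i)) \<noteq> 0 \<and>
      0 < (if even i then - 1 else - (- 1)) * ratio (run_state l ms (Suc i))"
    using run_state_ratio_near_minus_one[OF assms, of "Suc i"] by auto
qed

lemma first_failure_left:
  fixes P :: "real \<Rightarrow> bool"
  assumes "a < d" "d < l1" and init: "\<forall>l\<in>{a<..d}. P l" and "\<not> P l1"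
    and openness: "\<And>l. a < l \<Longrightarrow> P l \<Longrightarrow> \<forall>\<^sub>F x in at l. P x"
  shows "\<exists>l0\<in>{d<..l1}. \<not> P l0 \<and> (\<forall>\<^sub>F l in at_left l0. P l)"
proof -
  define K where "K = {l. d \<le> l \<and> l \<le> l1 \<and> \<not> P l}"
  define l0 where "l0 = Inf K"
  have "l1 \<in> K" and bdd: "bdd_below K"
    using assms by (auto simp: K_def intro: bdd_belowI[of _ d])
  then have "K \<noteq> {}" "l0 \<le> l1"
    by (auto simp: l0_def intro: cInf_lower)
  then have "d \<le> l0"
    unfolding l0_def by (auto simp: K_def intro: cInf_greatest)
  have below: "P l" if "a < l" "l < l0" for l
  proof (cases "l \<le> d")
    case False
    have "l \<notin> K"
      using that(2) cInf_lower[OF _ bdd] by (force simp: l0_def)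
    then show ?thesis
      using False that(2) \<open>l0 \<le> l1\<close> by (simp add: K_def)
  qed (use init that in simp)
  have "\<not> P l0"
  proof
    assume "P l0"
    then obtain \<delta> where "0 < \<delta>" and near: "\<And>x. x \<noteq> l0 \<Longrightarrow> dist x l0 < \<delta> \<Longrightarrow> P x"
      using openness[of l0] \<open>d \<le> l0\<close> \<open>a < d\<close> by (auto simp: eventually_at)
    then obtain k where "k \<in> K" "k < l0 + \<delta>"
      using cInf_less_iff[OF \<open>K \<noteq> {}\<close> bdd, of "l0 + \<delta>"] by (auto simp: l0_def)
    moreover have "l0 \<le> k"
      using \<open>k \<in> K\<close> bdd by (simp add: l0_def cInf_lower)
    ultimately show False
      using near[of k] \<open>P l0\<close> by (cases "k = l0") (auto simp: K_def dist_real_def)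
  qed
  then have "d < l0"
    using init \<open>d \<le> l0\<close> \<open>a < d\<close> by (cases "l0 = d") auto
  moreover have "\<forall>\<^sub>F l in at_left l0. P l"
    using eventually_at_left_real[of a l0] \<open>a < d\<close> \<open>d \<le> l0\<close> by (auto elim: eventually_mono intro: below)
  ultimately show ?thesis
    using \<open>\<not> P l0\<close> \<open>l0 \<le> l1\<close> by auto
qed

lemma first_failure_right:
  fixes P :: "real \<Rightarrow> bool"
  assumes "l1 < d" "d < a" and "\<forall>l\<in>{d..<a}. P l" and "\<not> P l1"
    and openness: "\<And>l. l < a \<Longrightarrow> P l \<Longrightarrow> \<forall>\<^sub>F x in at l. P x"
  shows "\<exists>l0\<in>{l1..<d}. \<not> P l0 \<and> (\<forall>\<^sub>F l in at_right l0. P l)"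
proof -
  have "\<exists>l0\<in>{- d<..- l1}. \<not> P (- l0) \<and> (\<forall>\<^sub>F l in at_left l0. P (- l))"
  proof (rule first_failure_left)
    fix l assume "- a < l" "P (- l)"
    then have "\<forall>\<^sub>F x in at (- l). P x"
      using openness by simp
    then show "\<forall>\<^sub>F x in at l. P (- x)"
      by (simp add: filtermap_at_minus[symmetric] eventually_filtermap)
  qed (use assms in \<open>auto simp: minus_less_iff less_minus_iff\<close>)
  then obtain l0 where "l0 \<in> {- d<..- l1}" "\<not> P (- l0)" "\<forall>\<^sub>F l in at_left l0. P (- l)"
    by blast
  then show ?thesis
    by (intro bexI[of _ "- l0"]) (auto simp: at_right_minus eventually_filtermap)
qed

lemma positive_root_of_not_alternating:
  assumes "even (length ms)" and pos: "\<forall>i<length ms. 0 < ms ! i"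
    and "0 < l1" "\<not> alternating 1 l1 ms"
  shows "\<exists>l0\<in>{0<..l1}. fst (run_state l0 ms (length ms)) = 0"
proof -
  have "1/6 < l1"
    using alternating_near_zero[OF pos] assms(3,4) by force
  then obtain l0 where l0: "l0 \<in> {1/6<..l1}" "\<not> alternating 1 l0 ms"
    and near: "\<forall>\<^sub>F l in at_left l0. alternating 1 l ms"
    using first_failure_left[of 0 "1/6" l1 "\<lambda>l. alternating 1 l ms"]
      alternating_near_zero[OF pos] eventually_alternating assms(4) by force
  have "fst (run_state l0 ms (length ms)) = 0"
    using l0 by (intro alternating_boundary_root[OF assms(1) _ _ _ _ near]) auto
  then show ?thesis
    using l0(1) by force
qed

lemma root_below_minus_one_of_not_alternating:
  assumes "even (length ms)" and pos: "\<forall>i<length ms. 0 < ms ! i" and first: "2 \<le> ms ! 0"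
    and "l1 < -1" "\<not> alternating (-1) l1 ms"
  shows "\<exists>l0\<in>{l1..< -1}. fst (run_state l0 ms (length ms)) = 0"
proof -
  have "l1 < -7/6"
    using alternating_near_minus_one[OF pos first, of l1] assms(4,5) by (meson not_le)
  then obtain l0 where l0: "l0 \<in> {l1..< -7/6}" "\<not> alternating (-1) l0 ms"
    and near: "\<forall>\<^sub>F l in at_right l0. alternating (-1) l ms"
    using first_failure_right[of l1 "-7/6" "-1" "\<lambda>l. alternating (-1) l ms"]
      alternating_near_minus_one[OF pos first] eventually_alternating assms(5) by force
  have "fst (run_state l0 ms (length ms)) = 0"
    using l0 by (intro alternating_boundary_root[OF assms(1) _ _ _ _ near]) auto
  then show ?thesis
    using l0(1) by force
qed

section \<open>Anti-regular and block strings\<close>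

lemma string_state_append_replicate:
  "string_state l (b @ replicate m c) = run_step l c m (string_state l b)"
proof -
  have "foldl (\<lambda>v c. run_step l c 1 v) v (replicate m c) = run_step l c m v" for v
  proof (induction m arbitrary: v)
    case 0
    then show ?case by (cases c; cases v) simp_all
  next
    case (Suc m)
    then show ?case by (cases c; cases v) (simp_all add: algebra_simps)
  qed
  then show ?thesis
    by (simp add: string_state_def)
qed

definition anti_regular_runs :: "nat \<Rightarrow> nat list" where
  "anti_regular_runs K = 2 # replicate (2 * K - 1) 1"

lemma anti_regular_runs:
  assumes "1 \<le> K"
  shows "length (anti_regular_runs K) = 2 * K" "anti_regular_runs K ! 0 = 2"
    "\<And>i. 0 < i \<Longrightarrow> i < 2 * K \<Longrightarrow> anti_regular_runs K ! i = 1"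
    "\<forall>i<2 * K. 0 < anti_regular_runs K ! i"
  using assms by (auto simp: anti_regular_runs_def nth_Cons')

lemma anti_regular_string_odd: "anti_regular_string (2 * K + 1) = False # map odd [0..<2 * K]"
proof -
  have "concat (replicate K [False, True]) = map odd [0..<2 * K]"
  proof (induction K)
    case (Suc K)
    have "concat (replicate (Suc K) [False, True]) = concat (replicate K [False, True]) @ [False, True]"
      by (induction K) auto
    also have "\<dots> = map odd ([0..<2 * K] @ [2 * K, Suc (2 * K)])"
      using Suc.IH by simp
    also have "[0..<2 * K] @ [2 * K, Suc (2 * K)] = [0..<2 * Suc K]"
      by simp
    finally show ?case .
  qed simp
  then show ?thesis
    by (simp add: anti_regular_string_def)
qed

lemma anti_regular_prefix_state:
  assumes "1 \<le> r" "r \<le> 2 * K"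
  shows "string_state l (take (Suc r) (anti_regular_string (2 * K + 1))) =
    run_state l (anti_regular_runs K) r"
proof -
  define A where "A = anti_regular_string (2 * K + 1)"
  have A: "A = False # map odd [0..<2 * K]"
    by (simp only: A_def anti_regular_string_odd)
  have "string_state l (take (Suc r) A) = run_state l (anti_regular_runs K) r"
    using assms
  proof (induction r rule: dec_induct)
    case base
    then show ?case
      by (simp add: A anti_regular_runs_def string_state_def run_state.simps(2) upt_conv_Cons
          algebra_simps)
  next
    case (step r)
    have "A ! Suc r = odd r" "Suc r < length A" "anti_regular_runs K ! r = 1"
      using step by (simp_all add: A anti_regular_runs_def)
    then show ?case
      using step string_state_take_Suc[of "Suc r" A l] by (simp add: run_state.simps(2))
  qed
  then show ?thesis
    by (simp add: A_def)
qed

lemma eigenvalue_anti_regular_iff: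
  assumes "1 \<le> K" "l \<noteq> 0" "l \<noteq> -1"
  shows "eigenvalue (adj_matrix (anti_regular_string (2 * K + 1))) l \<longleftrightarrow>
    fst (run_state l (anti_regular_runs K) (2 * K)) = 0"
proof -
  define A where "A = anti_regular_string (2 * K + 1)"
  have A: "A = False # map odd [0..<2 * K]"
    by (simp only: A_def anti_regular_string_odd)
  have "take (Suc (2 * K)) A = A" "A \<noteq> []" "A ! 0 = False"
    by (simp_all add: A)
  moreover have "string_state l (take (Suc (2 * K)) A) = run_state l (anti_regular_runs K) (2 * K)"
    unfolding A_def using assms(1) by (intro anti_regular_prefix_state) auto
  ultimately show ?thesis
    unfolding A_def[symmetric] using eigenvalue_adj_matrix_iff[OF assms(2,3), of A] by metis
qed

definition block_runs :: "nat list \<Rightarrow> nat list \<Rightarrow> nat list" where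
  "block_runs s t = map (\<lambda>i. if even i then s ! (i div 2) else t ! (i div 2)) [0..<2 * length s]"

lemma length_block_runs [simp]: "length (block_runs s t) = 2 * length s"
  by (simp add: block_runs_def)

lemma block_runs_positive: "block_form b s t \<Longrightarrow> \<forall>i<2 * length s. 0 < block_runs s t ! i"
  by (auto simp: block_form_def block_runs_def Suc_le_eq)

lemma block_runs_nth_0: "0 < length s \<Longrightarrow> block_runs s t ! 0 = s ! 0"
  by (simp add: block_runs_def)

lemma length_block_form: 
  assumes "block_form b s t"
  shows "2 * length s + (s ! 0 - 1) \<le> length b"
proof -
  let ?k = "length s"
  have "0 < ?k"
    using assms by (auto simp: block_form_def)
  then have "2 * ?k + (s ! 0 - 1) = (\<Sum>i<?k. 2 + (if i = 0 then s ! 0 - 1 else 0))"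
    unfolding sum.distrib by simp
  also have "\<dots> \<le> (\<Sum>i<?k. s ! i + t ! i)"
  proof (intro sum_mono)
    fix i assume "i \<in> {..<?k}"
    then have "1 \<le> s ! i" "1 \<le> t ! i"
      using assms by (auto simp: block_form_def)
    then show "2 + (if i = 0 then s ! 0 - 1 else 0) \<le> s ! i + t ! i"
      by auto
  qed
  also have "\<dots> = length b"
    using assms by (simp add: block_form_def length_concat sum_set_upt_conv_sum_list_nat[symmetric]
        atLeast0LessThan)
  finally show ?thesis .
qed

lemma string_state_block_form:
  assumes "block_form b s t"
  shows "string_state l b = run_state l (block_runs s t) (2 * length s)"
proof -
  let ?block = "\<lambda>i. replicate (s ! i) False @ replicate (t ! i) True"
  have "string_state l (concat (map ?block [0..<k])) = run_state l (block_runs s t) (2 * k)"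
    if "k \<le> length s" for k
    using that
  proof (induction k)
    case (Suc k)
    have "concat (map ?block [0..<Suc k]) =
        (concat (map ?block [0..<k]) @ replicate (s ! k) False) @ replicate (t ! k) True"
      by simp
    then have "string_state l (concat (map ?block [0..<Suc k])) =
        run_step l True (t ! k) (run_step l False (s ! k) (string_state l (concat (map ?block [0..<k]))))"
      by (simp only: string_state_append_replicate)
    moreover have "block_runs s t ! (2 * k) = s ! k" "block_runs s t ! Suc (2 * k) = t ! k"
      using Suc.prems by (simp_all add: block_runs_def)
    ultimately show ?case
      using Suc by (simp add: run_state.simps(2))
  qed (simp add: string_state_def)
  then show ?thesis
    using assms by (simp add: block_form_def)
qed

lemma eigenvalue_block_form_iff:
  assumes "block_form b s t" "l \<noteq> 0" "l \<noteq> -1"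
  shows "eigenvalue (adj_matrix b) l \<longleftrightarrow> fst (run_state l (block_runs s t) (2 * length s)) = 0"
proof -
  have "0 < length s"
    using assms(1) by (auto simp: block_form_def)
  moreover from this have "0 < s ! 0"
    using assms(1) by (auto simp: block_form_def Suc_le_eq)
  ultimately have "b = replicate (s ! 0) False @ replicate (t ! 0) True @
      concat (map (\<lambda>i. replicate (s ! i) False @ replicate (t ! i) True) [1..<length s])"
    using assms(1) by (simp add: block_form_def upt_conv_Cons)
  then have "b \<noteq> []" "b ! 0 = False"
    using \<open>0 < s ! 0\<close> by (cases "s ! 0"; simp)+
  then show ?thesis
    using eigenvalue_adj_matrix_iff[OF assms(2,3)] string_state_block_form[OF assms(1)] by metis
qed

text \<open>With \<open>s = ms ! 0\<close> and \<open>t = ms ! 1\<close>, any \<open>l > 0\<close> with \<open>t (l + s) \<le> l (l + 1)\<close> would do: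
  the first coordinate is then still nonnegative after the second run.\<close>
lemma not_alternating_at_first_runs:
  assumes "1 < length ms" "0 < ms ! 0"
  shows "\<not> alternating 1 (real (ms ! 0 + ms ! 1)) ms"
proof
  define s t where "s = real (ms ! 0)" and "t = real (ms ! 1)"
  define L where "L = s + t"
  assume "alternating 1 (real (ms ! 0 + ms ! 1)) ms"
  then have "run_product L ms 2 < 0"
    using assms(1) by (auto simp: alternating_def L_def s_def t_def numeral_2_eq_2 dest: spec[of _ 1])
  have "1 \<le> s" "0 \<le> t" "0 < L"
    using assms(2) by (simp_all add: s_def t_def L_def)
  have "L * (L + 1) - t * (L + s) = s\<^sup>2 + s + t"
    by (simp add: L_def algebra_simps power2_eq_square)
  then have "t * (L + s) \<le> L * (L + 1)"
    using \<open>1 \<le> s\<close> \<open>0 \<le> t\<close> zero_le_power2[of s] by linarith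
  then have "t * (L + s) / (L * (L + 1)) \<le> 1"
    using \<open>0 < L\<close> by (simp add: divide_le_eq)
  moreover have "run_state L ms 2 = (1 - t * (L + s) / (L * (L + 1)), 1 + s / L)"
    using \<open>0 < L\<close> by (simp add: numeral_2_eq_2 run_state.simps(2) isolated_coeff_def
        dominating_coeff_def s_def t_def field_simps)
  moreover have "0 < 1 + s / L"
    using \<open>1 \<le> s\<close> \<open>0 < L\<close> by (simp add: add_pos_nonneg)
  ultimately have "0 \<le> run_product L ms 2"
    by (simp add: run_product_def)
  with \<open>run_product L ms 2 < 0\<close> show False
    by simp
qed

lemma block_form_positive_eigenvalue:
  assumes "block_form b s t"
  shows "\<exists>x>0. eigenvalue (adj_matrix b) x"
proof -
  let ?ms = "block_runs s t"
  let ?L = "real (?ms ! 0 + ?ms ! 1)"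
  have "0 < length s" "0 < s ! 0"
    using assms by (auto simp: block_form_def Suc_le_eq)
  then have "1 < length ?ms" "0 < ?ms ! 0" "0 < ?L"
    by (simp_all only: length_block_runs block_runs_nth_0)
  then have "\<not> alternating 1 ?L ?ms"
    by (intro not_alternating_at_first_runs)
  then obtain l0 where "0 < l0" "fst (run_state l0 ?ms (2 * length s)) = 0"
    using positive_root_of_not_alternating[of ?ms ?L] block_runs_positive[OF assms] \<open>0 < ?L\<close> by auto
  then show ?thesis
    using eigenvalue_block_form_iff[OF assms] by auto
qed

section \<open>Comparison with the anti-regular string\<close>

lemma moebius_mono:
  fixes x y k :: real
  assumes "0 < (1 + k * x) * (1 + k * y)" "x \<le> y"
  shows "x / (1 + k * x) \<le> y / (1 + k * y)"
proof -
  have "1 + k * x \<noteq> 0" "1 + k * y \<noteq> 0"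
    using assms(1) by auto
  then have "x / (1 + k * x) - y / (1 + k * y) = (x - y) / ((1 + k * x) * (1 + k * y))"
    by (simp add: field_simps)
  also have "\<dots> \<le> 0"
    using assms by (intro divide_nonpos_pos) auto
  finally show ?thesis
    by simp
qed

lemma moebius_coeff_antimono:
  fixes x k k' :: real
  assumes "0 < x" "k \<le> k'" "1 + k' * x < 0"
  shows "x / (1 + k' * x) \<le> x / (1 + k * x)"
proof -
  have "k * x \<le> k' * x"
    using assms by (intro mult_right_mono) auto
  then have "1 + k * x < 0"
    using assms(3) by linarith
  have "x / (1 + k' * x) - x / (1 + k * x) = x * ((k - k') * x) / ((1 + k * x) * (1 + k' * x))"
    using \<open>1 + k * x < 0\<close> assms(3) by (simp add: field_simps)
  also have "\<dots> \<le> 0"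
    using assms \<open>1 + k * x < 0\<close>
    by (intro divide_nonpos_pos) (simp_all add: mult_nonneg_nonpos mult_nonpos_nonneg mult_neg_neg)
  finally show ?thesis
    by simp
qed

lemma moebius_bounds_beyond_pole:
  fixes H y g k :: real
  assumes "0 < H" "H \<le> y" "k \<le> g" "g < 0" "H / (1 + g * H) < 0"
  shows "1 + k * y < 0" "H / (1 + g * H) \<le> y / (1 + k * y)"
proof -
  have "1 + g * H < 0"
    using assms(1,5) by (simp add: divide_less_0_iff)
  moreover have "g * y \<le> g * H"
    using assms(2,4) by (simp add: mult_left_mono_neg)
  ultimately have gy: "1 + g * y < 0"
    by linarith
  moreover have "k * y \<le> g * y"
    using assms by (intro mult_right_mono) auto
  ultimately show "1 + k * y < 0"
    by linarith
  have "H / (1 + g * H) \<le> y / (1 + g * y)"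
    using \<open>1 + g * H < 0\<close> gy assms(2) by (intro moebius_mono) (simp_all add: mult_neg_neg)
  also have "\<dots> \<le> y / (1 + k * y)"
    using assms gy by (intro moebius_coeff_antimono) auto
  finally show "H / (1 + g * H) \<le> y / (1 + k * y)" .
qed

definition majorized :: "(nat \<Rightarrow> real) \<Rightarrow> nat \<Rightarrow> real \<Rightarrow> bool" where
  "majorized a m x \<longleftrightarrow> (\<exists>i\<in>{1..m}. if odd i then 0 < x \<and> x \<le> a i else x \<le> a i)"

lemma majorized_run_step_isolated:
  assumes "l < 0" "majorized a m (ratio v)" "fst v \<noteq> 0"
    and a_iso: "\<And>i. odd i \<Longrightarrow> i \<le> m \<Longrightarrow> a (Suc i) = a i + isolated_coeff l"
  shows "majorized a (Suc m) (ratio (run_step l False 1 v))"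
proof -
  have iso: "isolated_coeff l < 0"
    using assms(1) by (simp add: isolated_coeff_def)
  obtain i where i: "i \<in> {1..m}"
    and bound: "if odd i then 0 < ratio v \<and> ratio v \<le> a i else ratio v \<le> a i"
    using assms(2) unfolding majorized_def by blast
  have "ratio (run_step l False 1 v) = ratio v + isolated_coeff l"
    using ratio_run_step_isolated[OF assms(3)] by simp
  moreover have "majorized a (Suc m) (ratio v + isolated_coeff l)"
  proof (cases "odd i")
    case True
    then have "ratio v + isolated_coeff l \<le> a (Suc i)"
      using a_iso[OF True] i bound by simp
    then show ?thesis
      unfolding majorized_def using i True by (intro bexI[of _ "Suc i"]) auto
  next
    case False
    then show ?thesis
      unfolding majorized_def using i bound iso by (intro bexI[of _ i]) auto
  qed
  ultimately show ?thesis
    by simp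
qed

lemma majorized_run_step_dominating:
  assumes "l < -1" "majorized a m (ratio v)" "fst v \<noteq> 0"
    and a_dom: "\<And>i. even i \<Longrightarrow> 0 < i \<Longrightarrow> i \<le> m \<Longrightarrow> a (Suc i) = a i / (1 + dominating_coeff l * a i)"
    and a_sign: "\<And>i. 0 < i \<Longrightarrow> i \<le> Suc m \<Longrightarrow> if odd i then 0 < a i else a i < 0"
  shows "fst (run_step l True 1 v) \<noteq> 0 \<and> majorized a (Suc m) (ratio (run_step l True 1 v))"
proof -
  let ?x = "ratio v" and ?g = "dominating_coeff l"
  have g: "0 < ?g"
    using assms(1) by (simp add: dominating_coeff_def field_simps)
  obtain i where i: "i \<in> {1..m}" and bound: "if odd i then 0 < ?x \<and> ?x \<le> a i else ?x \<le> a i"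
    using assms(2) unfolding majorized_def by blast
  have step: "fst (run_step l True 1 v) = fst v * (1 + ?g * ?x)"
    "ratio (run_step l True 1 v) = ?x / (1 + ?g * ?x)"
    using fst_run_step_dominating[OF assms(3)] ratio_run_step_dominating[OF assms(3)] by simp_all
  show ?thesis
  proof (cases "odd i")
    case True
    then have "0 < ?x" "1 < 1 + ?g * ?x"
      using bound g by simp_all
    then have "0 < ?x / (1 + ?g * ?x)" "?x / (1 + ?g * ?x) \<le> ?x"
      by (simp_all add: divide_le_eq)
    then show ?thesis
      unfolding step majorized_def using assms(3) \<open>1 < 1 + ?g * ?x\<close> i True bound
      by (intro conjI bexI[of _ i]) auto
  next
    case False
    then have "a i < 0" "0 < a (Suc i)" "a (Suc i) = a i / (1 + ?g * a i)"
      using i a_sign[of i] a_sign[of "Suc i"] a_dom[of i] by auto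
    then have "1 + ?g * a i < 0"
      by (simp add: zero_less_divide_iff)
    moreover have "?g * ?x \<le> ?g * a i"
      using bound False g by simp
    ultimately have "1 + ?g * ?x < 0"
      by linarith
    moreover have "?x / (1 + ?g * ?x) \<le> a (Suc i)"
      using \<open>1 + ?g * a i < 0\<close> \<open>1 + ?g * ?x < 0\<close> bound False \<open>a (Suc i) = _\<close>
      by (simp add: moebius_mono mult_neg_neg)
    moreover have "0 < ?x / (1 + ?g * ?x)"
      using \<open>1 + ?g * ?x < 0\<close> \<open>a i < 0\<close> bound False by (simp add: divide_neg_neg)
    ultimately show ?thesis
      unfolding step majorized_def using assms(3) i False by (intro conjI bexI[of _ "Suc i"]) auto
  qed
qed

text \<open>The sequence \<open>a\<close> stands for the letter-by-letter ratios of the anti-regular string. Being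
  majorized by one of \<open>a 1, \<dots>, a m\<close> keeps the ratio of \<open>b\<close> away from the pole of the next
  dominating step.\<close>
lemma fst_string_state_nonzero_if_majorized:
  fixes a :: "nat \<Rightarrow> real"
  assumes "l < -1" "length b = n" "0 < n" "b ! 0 = False"
    and a1: "a 1 = 1 + isolated_coeff l"
    and a_iso: "\<And>i. odd i \<Longrightarrow> i < n \<Longrightarrow> a (Suc i) = a i + isolated_coeff l"
    and a_dom: "\<And>i. even i \<Longrightarrow> 0 < i \<Longrightarrow> i < n \<Longrightarrow> a (Suc i) = a i / (1 + dominating_coeff l * a i)"
    and a_sign: "\<And>i. 0 < i \<Longrightarrow> i \<le> n \<Longrightarrow> if odd i then 0 < a i else a i < 0"
  shows "fst (string_state l b) \<noteq> 0"
proof -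
  let ?X = "\<lambda>m. string_state l (take m b)"
  have "fst (?X m) \<noteq> 0 \<and> majorized a m (ratio (?X m))" if "1 \<le> m" "m \<le> n" for m
    using that
  proof (induction m rule: dec_induct)
    case base
    have "?X 1 = (1, 1 + isolated_coeff l)"
      using assms(2-4) by (cases b) (simp_all add: string_state_def)
    moreover have "0 < 1 + isolated_coeff l"
      using assms(1) by (simp add: isolated_coeff_def field_simps)
    ultimately show ?case
      using a1 by (auto simp: majorized_def ratio_def)
  next
    case (step m)
    then have X: "?X (Suc m) = run_step l (b ! m) 1 (?X m)"
      using assms(2) string_state_take_Suc by simp
    show ?case
    proof (cases "b ! m")
      case True
      then show ?thesis
        using X step majorized_run_step_dominating[OF assms(1), of a m "?X m"] a_dom a_sign by simp
    next
      case False
      then show ?thesis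
        using X step majorized_run_step_isolated[of l a m "?X m"] a_iso assms(1)
        by (simp add: fst_run_step)
    qed
  qed
  from this[of n] show ?thesis
    using assms(2,3) by simp
qed

lemma anti_regular_string_state_sign:
  assumes "1 \<le> K" "alternating (-1) l (anti_regular_runs K)" "l < -1" "0 < i" "i \<le> 2 * K + 1"
  shows "fst (string_state l (take i (anti_regular_string (2 * K + 1)))) \<noteq> 0 \<and>
    (if odd i then 0 < ratio (string_state l (take i (anti_regular_string (2 * K + 1))))
     else ratio (string_state l (take i (anti_regular_string (2 * K + 1)))) < 0)"
proof -
  obtain j where "i = Suc j"
    using assms(4) gr0_implies_Suc by blast
  then consider "i = 1" | r where "i = Suc (Suc r)" "r < 2 * K"
    using assms(5) by (cases j) auto
  then show ?thesis
  proof cases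
    case 1
    have "take i (anti_regular_string (2 * K + 1)) = [False]"
      using 1 by (simp only: anti_regular_string_odd) simp
    moreover have "0 < 1 + isolated_coeff l"
      using assms(3) by (simp add: isolated_coeff_def field_simps)
    ultimately show ?thesis
      using 1 by (simp add: string_state_def ratio_def)
  next
    case 2
    then have "string_state l (take i (anti_regular_string (2 * K + 1))) =
        run_state l (anti_regular_runs K) (Suc r)"
      using anti_regular_prefix_state[of "Suc r" K l] by simp
    then show ?thesis
      using 2 alternatingD[OF assms(2), of "Suc r"] anti_regular_runs(1)[OF assms(1)] by auto
  qed
qed

lemma fst_string_state_nonzero_if_alternating:
  assumes "1 \<le> K" "l < -1" "alternating (-1) l (anti_regular_runs K)"
    and "length b = 2 * K + 1" "b ! 0 = False"
  shows "fst (string_state l b) \<noteq> 0"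
proof -
  define A where "A = anti_regular_string (2 * K + 1)"
  define a where "a i = ratio (string_state l (take i A))" for i
  have A: "A = False # map odd [0..<2 * K]"
    by (simp only: A_def anti_regular_string_odd)
  note sign = anti_regular_string_state_sign[OF assms(1,3,2), folded A_def a_def]
  have step: "string_state l (take (Suc i) A) = run_step l (even i) 1 (string_state l (take i A))"
    if "0 < i" "i < 2 * K + 1" for i
  proof -
    have "A ! i = even i" "i < length A"
      using that by (cases i; simp add: A)+
    then show ?thesis
      using string_state_take_Suc[of i A l] by simp
  qed
  show ?thesis
  proof (rule fst_string_state_nonzero_if_majorized[OF assms(2,4) _ assms(5), of a])
    show "a 1 = 1 + isolated_coeff l"
      by (simp add: a_def A string_state_def ratio_def)
    show "a (Suc i) = a i + isolated_coeff l" if "odd i" "i < 2 * K + 1" for i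
      using that step[of i] sign[of i] by (simp add: a_def ratio_run_step_isolated odd_pos)
    show "a (Suc i) = a i / (1 + dominating_coeff l * a i)" if "even i" "0 < i" "i < 2 * K + 1" for i
      using that step[of i] sign[of i] by (simp add: a_def ratio_run_step_dominating)
  qed (use sign in auto)
qed

lemma minorized_run_step_dominating:
  assumes "0 < l" "0 < m" "fst v \<noteq> 0" "0 < H" "H \<le> ratio v"
    and "H / (1 + dominating_coeff l * H) < 0"
  shows "fst (run_step l True m v) \<noteq> 0 \<and> H / (1 + dominating_coeff l * H) \<le> ratio (run_step l True m v)
    \<and> ratio (run_step l True m v) < 0"
proof -
  let ?g = "dominating_coeff l"
  have "?g < 0"
    using assms(1) by (simp add: dominating_coeff_def field_simps)
  moreover have "m * ?g \<le> 1 * ?g"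
    using assms(2) \<open>?g < 0\<close> by (intro mult_right_mono_neg) (auto simp: Suc_le_eq)
  ultimately have "1 + m * ?g * ratio v < 0" "H / (1 + ?g * H) \<le> ratio v / (1 + m * ?g * ratio v)"
    using moebius_bounds_beyond_pole[OF assms(4,5), of "m * ?g" ?g] assms(6) by simp_all
  moreover have "0 < ratio v"
    using assms(4,5) by linarith
  ultimately show ?thesis
    using assms(3) by (simp add: fst_run_step_dominating ratio_run_step_dominating divide_pos_neg)
qed

lemma fst_run_state_nonzero_if_minorized:
  fixes h :: "nat \<Rightarrow> real"
  assumes "0 < l" "0 < k" "2 * k + d \<le> N" "even d" and pos: "\<forall>i<2 * k. 0 < ms ! i"
    and h_iso: "\<And>i. even i \<Longrightarrow> 2 \<le> i \<Longrightarrow> i < N \<Longrightarrow> h (Suc i) = h i + isolated_coeff l"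
    and h_dom: "\<And>i. odd i \<Longrightarrow> i < N \<Longrightarrow> h (Suc i) = h i / (1 + dominating_coeff l * h i)"
    and h_sign: "\<And>i. 0 < i \<Longrightarrow> i \<le> N \<Longrightarrow> if odd i then 0 < h i else h i < 0"
    and base: "h (Suc d) \<le> 1 + real (ms ! 0) * isolated_coeff l"
  shows "fst (run_state l ms (2 * k)) \<noteq> 0"
proof -
  let ?y = "\<lambda>i. ratio (run_state l ms i)"
  have iso: "0 < isolated_coeff l"
    using assms(1) by (simp add: isolated_coeff_def)
  have "fst (run_state l ms i) \<noteq> 0 \<and> h (i + d) \<le> ?y i \<and> (even i \<longrightarrow> ?y i < 0)"
    if "1 \<le> i" "i \<le> 2 * k" for i
    using that
  proof (induction i rule: dec_induct)
    case base
    then show ?case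
      using \<open>h (Suc d) \<le> _\<close> by (simp add: run_state.simps(2) ratio_def)
  next
    case (step i)
    let ?v = "run_state l ms i" and ?m = "real (ms ! i)"
    have m: "0 < ms ! i" and T: "fst ?v \<noteq> 0" and y: "h (i + d) \<le> ?y i"
      using pos step by auto
    show ?case
    proof (cases "odd i")
      case True
      have "0 < h (i + d)" "h (i + d) / (1 + dominating_coeff l * h (i + d)) < 0"
        "h (Suc (i + d)) = h (i + d) / (1 + dominating_coeff l * h (i + d))"
        using True step assms(3,4) h_sign[of "i + d"] h_sign[of "Suc (i + d)"] h_dom[of "i + d"] by auto
      then show ?thesis
        using minorized_run_step_dominating[OF assms(1) m T _ y] True by (simp add: run_state.simps(2))
    next
      case False
      have "h (Suc (i + d)) = h (i + d) + isolated_coeff l"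
        using False step assms(3,4) by (intro h_iso) auto
      moreover have "1 * isolated_coeff l \<le> ?m * isolated_coeff l"
        using m iso by (intro mult_right_mono) (auto simp: Suc_le_eq)
      ultimately show ?thesis
        using False T y by (simp add: run_state.simps(2) fst_run_step ratio_run_step_isolated)
    qed
  qed
  from this[of "2 * k"] show ?thesis
    using assms(2) by simp
qed

lemma fst_block_run_state_nonzero_if_alternating:
  assumes "1 \<le> K" "0 < l" "alternating 1 l (anti_regular_runs K)" "block_form b s t"
    and "2 \<le> s ! 0 \<and> length s \<le> K \<or> s ! 0 = 1 \<and> length s < K"
  shows "fst (run_state l (block_runs s t) (2 * length s)) \<noteq> 0"
proof -
  let ?ms = "anti_regular_runs K"
  define h where "h r = ratio (run_state l ?ms r)" for r
  note ms = anti_regular_runs[OF assms(1)]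
  have alt: "fst (run_state l ?ms i) \<noteq> 0 \<and> (if odd i then 0 < h i else h i < 0)"
    if "0 < i" "i \<le> 2 * K" for i
    using alternatingD[OF assms(3), of i] that ms(1) by (auto simp: h_def)
  have h_iso: "h (Suc i) = h i + isolated_coeff l" if "even i" "2 \<le> i" "i < 2 * K" for i
    using that alt[of i] ms(3)[of i] by (simp add: h_def run_state.simps(2) ratio_run_step_isolated)
  have h_dom: "h (Suc i) = h i / (1 + dominating_coeff l * h i)" if "odd i" "i < 2 * K" for i
    using that alt[of i] ms(3)[of i]
    by (simp add: h_def run_state.simps(2) ratio_run_step_dominating odd_pos)
  have h1: "h 1 = 1 + 2 * isolated_coeff l"
    using ms(2) by (simp add: h_def run_state.simps(2) ratio_def)
  have iso: "0 < isolated_coeff l"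
    using assms(2) by (simp add: isolated_coeff_def)
  have k: "0 < length s" and pos: "\<forall>i<2 * length s. 0 < block_runs s t ! i"
    using assms(4) block_runs_positive by (auto simp: block_form_def)
  note minorized =
    fst_run_state_nonzero_if_minorized[OF assms(2) k _ _ pos h_iso h_dom alt[THEN conjunct2]]
  from assms(5) show ?thesis
  proof
    assume s: "2 \<le> s ! 0 \<and> length s \<le> K"
    have "2 * isolated_coeff l \<le> real (s ! 0) * isolated_coeff l"
      using s iso by (intro mult_right_mono) auto
    then show ?thesis
      using s k h1 by (intro minorized[of 0]) (simp_all add: block_runs_nth_0)
  next
    assume s: "s ! 0 = 1 \<and> length s < K"
    then have "2 < 2 * K"
      using k by linarith
    then have "h 3 = h 2 + isolated_coeff l" "h 2 < 0"
      using h_iso[of 2] alt[of 2] by (simp_all add: numeral_3_eq_3)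
    then show ?thesis
      using s k by (intro minorized[of 2]) (simp_all add: block_runs_nth_0)
  qed
qed

section \<open>Extremality of the anti-regular graph\<close>

text \<open>Moving away from \<open>-1\<close> (resp. \<open>0\<close>), the sign pattern of the anti-regular runs first breaks
  down at an eigenvalue of \<open>A\<^sub>2\<^sub>K\<^sub>+\<^sub>1\<close>, so it suffices that it is broken at the eigenvalues of
  \<open>G(b)\<close>.\<close>
lemma mu_minus_le_anti_regular_if_alternating:
  assumes "1 \<le> K" "\<exists>x. eigenvalue (adj_matrix b) x \<and> x < -1"
    and excl: "\<And>l. l < -1 \<Longrightarrow> eigenvalue (adj_matrix b) l \<Longrightarrow> \<not> alternating (-1) l (anti_regular_runs K)"
  shows "mu_minus (adj_matrix b) \<le> mu_minus (adj_matrix (anti_regular_string (2 * K + 1)))"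
proof -
  let ?y = "mu_minus (adj_matrix b)" and ?A = "adj_matrix (anti_regular_string (2 * K + 1))"
  have "?y \<in> {x. eigenvalue (adj_matrix b) x \<and> x < -1}"
    unfolding mu_minus_def using assms(2) by (intro Max_in finite_eigenvalues_adj_matrix) auto
  then have "?y < -1" "\<not> alternating (-1) ?y (anti_regular_runs K)"
    using excl by auto
  then obtain l0 where "?y \<le> l0" "l0 < -1" "fst (run_state l0 (anti_regular_runs K) (2 * K)) = 0"
    using root_below_minus_one_of_not_alternating[of "anti_regular_runs K" ?y]
      anti_regular_runs(1,2,4)[OF assms(1)] by auto
  moreover from this have "l0 \<le> mu_minus ?A"
    unfolding mu_minus_def using eigenvalue_anti_regular_iff[OF assms(1)]
    by (intro Max_ge finite_eigenvalues_adj_matrix) auto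
  ultimately show ?thesis
    by linarith
qed

lemma anti_regular_mu_plus_le_if_alternating:
  assumes "1 \<le> K" "\<exists>x>0. eigenvalue (adj_matrix b) x"
    and excl: "\<And>l. 0 < l \<Longrightarrow> eigenvalue (adj_matrix b) l \<Longrightarrow> \<not> alternating 1 l (anti_regular_runs K)"
  shows "mu_plus (adj_matrix (anti_regular_string (2 * K + 1))) \<le> mu_plus (adj_matrix b)"
proof -
  let ?y = "mu_plus (adj_matrix b)" and ?A = "adj_matrix (anti_regular_string (2 * K + 1))"
  have "?y \<in> {x. eigenvalue (adj_matrix b) x \<and> 0 < x}"
    unfolding mu_plus_def using assms(2) by (intro Min_in finite_eigenvalues_adj_matrix) auto
  then have "0 < ?y" "\<not> alternating 1 ?y (anti_regular_runs K)"
    using excl by auto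
  then obtain l0 where "0 < l0" "l0 \<le> ?y" "fst (run_state l0 (anti_regular_runs K) (2 * K)) = 0"
    using positive_root_of_not_alternating[of "anti_regular_runs K" ?y]
      anti_regular_runs(1,2,4)[OF assms(1)] by auto
  moreover from this have "mu_plus ?A \<le> l0"
    unfolding mu_plus_def using eigenvalue_anti_regular_iff[OF assms(1)]
    by (intro Min_le finite_eigenvalues_adj_matrix) auto
  ultimately show ?thesis
    by linarith
qed

lemma mu_minus_le_anti_regular:
  assumes "threshold_string (2 * K + 1) b" "1 \<le> K" "\<exists>x. eigenvalue (adj_matrix b) x \<and> x < -1"
  shows "mu_minus (adj_matrix b) \<le> mu_minus (adj_matrix (anti_regular_string (2 * K + 1)))"
proof (rule mu_minus_le_anti_regular_if_alternating[OF assms(2,3)])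
  fix l assume "l < -1" "eigenvalue (adj_matrix b) l"
  moreover have "length b = 2 * K + 1" "b ! 0 = False" "b \<noteq> []"
    using assms(1) by (auto simp: threshold_string_def)
  ultimately show "\<not> alternating (-1) l (anti_regular_runs K)"
    using fst_string_state_nonzero_if_alternating[OF assms(2)] eigenvalue_adj_matrix_iff[of l b] by auto
qed

lemma anti_regular_mu_plus_le_block_form:
  assumes "block_form b s t" "length b = 2 * K + 1" "1 \<le> K"
    and "2 \<le> s ! 0 \<or> s ! 0 = 1 \<and> 2 * length s + 1 < length b"
  shows "mu_plus (adj_matrix (anti_regular_string (2 * K + 1))) \<le> mu_plus (adj_matrix b)"
  using assms(3) block_form_positive_eigenvalue[OF assms(1)]
proof (rule anti_regular_mu_plus_le_if_alternating)
  fix l assume "0 < l" "eigenvalue (adj_matrix b) l"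
  moreover have "2 \<le> s ! 0 \<and> length s \<le> K \<or> s ! 0 = 1 \<and> length s < K"
    using assms(2,4) length_block_form[OF assms(1)] by auto
  ultimately show "\<not> alternating 1 l (anti_regular_runs K)"
    using fst_block_run_state_nonzero_if_alternating[OF assms(3) _ _ assms(1)]
      eigenvalue_block_form_iff[OF assms(1)] by auto
qed

theorem theorem4p3:
  fixes n :: nat
  assumes "odd n" and "n \<ge> 3"
  shows "(\<forall>b. threshold_string n b \<and> (\<exists>x. eigenvalue (adj_matrix b) x \<and> x < -1) \<longrightarrow>
            mu_minus (adj_matrix b) \<le> mu_minus (adj_matrix (anti_regular_string n)))
       \<and> (\<forall>b s t. threshold_string n b \<and> block_form b s t \<and> s ! 0 \<ge> 2 \<longrightarrow>
            mu_plus (adj_matrix (anti_regular_string n)) \<le> mu_plus (adj_matrix b))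
       \<and> (\<forall>b s t. threshold_string n b \<and> block_form b s t \<and> s ! 0 = 1 \<and> 2 * length s + 1 < n \<longrightarrow>
            mu_plus (adj_matrix (anti_regular_string n)) \<le> mu_plus (adj_matrix b))"
proof -
  obtain K where n: "n = 2 * K + 1"
    using assms(1) oddE by blast
  with assms(2) have K: "1 \<le> K"
    by simp
  show ?thesis
    unfolding n using mu_minus_le_anti_regular[OF _ K] anti_regular_mu_plus_le_block_form[OF _ _ K]
    by (auto simp: threshold_string_def)
qed

end
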